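(* Let $N\ge3$ and let $\Omega,\chi\in L^2(\mathbb{R}^{2N},\mathbb{C})$ be symmetric with respect to exchange of the variables $x_2,\dots,x_N$. Let $O_{1,2}$ be an operator acting on the first and second coordinates, and for $j\ge2$ let $O_{1,j}$ denote the corresponding operator acting in the same way on the first and $j$-th coordinates. Then $$|\langle\!\langle\Omega,O_{1,2}\chi\rangle\!\rangle|\le\|\Omega\|^2+|\langle\!\langle O_{1,2}\chi,O_{1,3}\chi\rangle\!\rangle|+\frac{1}{N-1}\|O_{1,2}\chi\|^2.$$
   Context: $\langle\!\langle\cdot,\cdot\rangle\!\rangle$ denotes the scalar product on $L^2(\mathbb{R}^{2N},\mathbb{C})$, with variables $x_1,\dots,x_N\in\mathbb{R}^2$; $\chi$ is assumed in the domain of the operators $O_{1,j}$. *)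

theory Defs
  imports "HOL-Analysis.Analysis" "HOL-Combinatorics.Transposition"
begin

(* Configuration space R^{2N}: N particles x_i \<in> R^2, indexed by a finite type 'n, CARD('n) = N *)
type_synonym 'n cfg = "real^2^'n"

definition relabel :: "('n::finite \<Rightarrow> 'n) \<Rightarrow> 'n cfg \<Rightarrow> 'n cfg" where
  "relabel s x = (\<chi> i. x $ s i)"

definition L2 :: "('n::finite cfg \<Rightarrow> complex) set" where
  "L2 = {f. f \<in> borel_measurable lborel \<and> integrable lborel (\<lambda>x. (cmod (f x))^2)}"

definition ip :: "('n::finite cfg \<Rightarrow> complex) \<Rightarrow> ('n cfg \<Rightarrow> complex) \<Rightarrow> complex" where
  "ip f g = (\<integral>x. cnj (f x) * g x \<partial>lborel)"

definition nrm :: "('n::finite cfg \<Rightarrow> complex) \<Rightarrow> real" where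
  "nrm f = sqrt (\<integral>x. (cmod (f x))^2 \<partial>lborel)"

definition sym_except :: "'n::finite \<Rightarrow> ('n cfg \<Rightarrow> complex) \<Rightarrow> bool" where
  "sym_except a f \<longleftrightarrow>
     (\<forall>s. s permutes (UNIV - {a}) \<longrightarrow> (AE x in lborel. f (relabel s x) = f x))"

(* O is an operator on functions of the configuration that acts only on the variables x_a, x_b:
   it is well defined on L^2 classes and commutes with relabellings of the remaining variables *)
definition acts_on :: "'n::finite \<Rightarrow> 'n \<Rightarrow> (('n cfg \<Rightarrow> complex) \<Rightarrow> ('n cfg \<Rightarrow> complex)) \<Rightarrow> bool" where
  "acts_on a b T \<longleftrightarrow>
     (\<forall>f g. (AE x in lborel. f x = g x) \<longrightarrow> (AE x in lborel. T f x = T g x)) \<and>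
     (\<forall>s f. s permutes (UNIV - {a, b}) \<longrightarrow>
        (AE x in lborel. T (f \<circ> relabel s) x = T f (relabel s x)))"

(* O_{1,j}: the operator acting on (x_1, x_j) in the same way as O = O_{1,2} acts on (x_1, x_2),
   obtained by conjugating with the exchange x_2 <-> x_j  (b plays the role of index 2) *)
definition op_1j :: "'n::finite \<Rightarrow> (('n cfg \<Rightarrow> complex) \<Rightarrow> ('n cfg \<Rightarrow> complex)) \<Rightarrow> 'n
                     \<Rightarrow> ('n cfg \<Rightarrow> complex) \<Rightarrow> ('n cfg \<Rightarrow> complex)" where
  "op_1j b T j f = T (f \<circ> relabel (Transposition.transpose b j)) \<circ> relabel (Transposition.transpose b j)"

end

theory Submission
  imports Defs
begin

(* Since Omega and Chi are symmetric in all variables but x_1, and permutations of the particles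
   preserve Lebesgue measure, the quantities <<Omega, O_{1,j} Chi>>, ||O_{1,j} Chi|| and
   <<O_{1,j} Chi, O_{1,k} Chi>> (j \<noteq> k) do not depend on j and k. Hence <<Omega, O_{1,2} Chi>>
   equals <<Omega, Phi>> for the average Phi = (N - 1)^-1 \<Sum>_j O_{1,j} Chi, and
   |<<Omega, Phi>>| \<le> ||Omega||^2 + ||Phi||^2. Expanding ||Phi||^2, the N - 1 diagonal terms
   contribute ||O_{1,2} Chi||^2 / (N - 1) and the off-diagonal ones at most
   |<<O_{1,2} Chi, O_{1,3} Chi>>|. *)

lemma linear_measurable_lborel:
  fixes f :: "'a::euclidean_space \<Rightarrow> 'b::euclidean_space"
  shows "linear f \<Longrightarrow> f \<in> lborel \<rightarrow>\<^sub>M lborel"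
  unfolding measurable_lborel1 measurable_lborel2
  by (intro borel_measurable_continuous_onI linear_continuous_on linear_conv_bounded_linear[THEN iffD1])

lemma inner_Basis_permuting_linear:
  fixes f :: "'a::euclidean_space \<Rightarrow> 'a"
  assumes f: "linear f" "bij_betw f Basis Basis" and b: "b \<in> Basis"
  shows "f x \<bullet> f b = x \<bullet> b"
proof -
  have "f x = f (\<Sum>b'\<in>Basis. (x \<bullet> b') *\<^sub>R b')"
    by (simp add: euclidean_representation)
  also have "\<dots> = (\<Sum>b'\<in>Basis. (x \<bullet> b') *\<^sub>R f b')"
    using f(1) by (simp add: linear_sum linear_scale o_def)
  also have "\<dots> \<bullet> f b = (\<Sum>b'\<in>Basis. (x \<bullet> b') * (f b' \<bullet> f b))"
    by (simp add: inner_sum_left)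
  also have "\<dots> = (\<Sum>b'\<in>Basis. (x \<bullet> b') * (b' \<bullet> b))"
  proof (intro sum.cong refl)
    fix b' :: 'a assume "b' \<in> Basis"
    then show "(x \<bullet> b') * (f b' \<bullet> f b) = (x \<bullet> b') * (b' \<bullet> b)"
      using b f(2) inj_on_eq_iff[OF bij_betw_imp_inj_on[OF f(2)]]
      by (simp add: inner_Basis bij_betw_apply)
  qed
  also have "\<dots> = (\<Sum>b'\<in>Basis. (x \<bullet> b') *\<^sub>R b') \<bullet> b"
    by (simp add: inner_sum_left)
  finally show ?thesis
    by (simp add: euclidean_representation)
qed

lemma distr_lborel_permuting_linear:
  fixes f :: "'a::euclidean_space \<Rightarrow> 'a"
  assumes f: "linear f" "bij_betw f Basis Basis"
  shows "distr lborel lborel f = lborel"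
proof (rule lborel_eqI[symmetric])
  let ?pull = "\<lambda>v. \<Sum>c\<in>Basis. (v \<bullet> f c) *\<^sub>R c"
  have pull_inner: "?pull v \<bullet> b = v \<bullet> f b" if "b \<in> Basis" for v b
    using that by (simp add: inner_sum_left inner_Basis if_distrib cong: if_cong)
  fix l u :: 'a
  assume le: "\<And>b. b \<in> Basis \<Longrightarrow> l \<bullet> b \<le> u \<bullet> b"
  have ball_Basis: "(\<forall>c\<in>Basis. P c) \<longleftrightarrow> (\<forall>b\<in>Basis. P (f b))" for P
  proof -
    have "(\<forall>c\<in>f ` Basis. P c) \<longleftrightarrow> (\<forall>b\<in>Basis. P (f b))"
      by simp
    then show ?thesis
      using bij_betw_imp_surj_on[OF f(2)] by simp
  qed
  have "x \<in> f -` box l u \<longleftrightarrow> x \<in> box (?pull l) (?pull u)" for x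
    using ball_Basis[of "\<lambda>c. l \<bullet> c < f x \<bullet> c \<and> f x \<bullet> c < u \<bullet> c"]
    by (simp add: box_def pull_inner inner_Basis_permuting_linear[OF f])
  then have preimage: "f -` box l u = box (?pull l) (?pull u)"
    by blast
  have pull_le: "?pull l \<bullet> b \<le> ?pull u \<bullet> b" if "b \<in> Basis" for b
    using that le[of "f b"] bij_betw_apply[OF f(2)] by (simp add: pull_inner)
  have "emeasure (distr lborel lborel f) (box l u) = emeasure lborel (box (?pull l) (?pull u))"
    using linear_measurable_lborel[OF f(1)] by (simp add: emeasure_distr preimage)
  also have "\<dots> = (\<Prod>b\<in>Basis. (u - l) \<bullet> f b)"
    using pull_le by (simp add: emeasure_lborel_box inner_diff_left pull_inner)
  also have "\<dots> = (\<Prod>b\<in>Basis. (u - l) \<bullet> b)"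
    using prod.reindex_bij_betw[OF f(2), of "\<lambda>b. (u - l) \<bullet> b"] by simp
  finally show "emeasure (distr lborel lborel f) (box l u) = (\<Prod>b\<in>Basis. (u - l) \<bullet> b)" .
qed simp

lemma relabel_comp: "relabel p (relabel q x) = relabel (q \<circ> p) x"
  by (simp add: relabel_def vec_eq_iff)

lemma relabel_id [simp]: "relabel id = id"
  by (simp add: relabel_def vec_eq_iff fun_eq_iff)

lemma linear_relabel: "linear (relabel s)"
  by (auto simp: linear_iff relabel_def vec_eq_iff)

lemma relabel_axis: "p permutes UNIV \<Longrightarrow> relabel p (axis i e) = axis (inv p i) e"
  by (auto simp: relabel_def axis_def vec_eq_iff permutes_inverses)

lemma bij_betw_relabel_Basis:
  assumes p: "p permutes UNIV"
  shows "bij_betw (relabel p) (Basis :: 'n::finite cfg set) Basis"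
proof (rule bij_betw_byWitness[where f' = "relabel (inv p)"])
  have p': "inv p permutes UNIV"
    using p by (rule permutes_inv)
  show "\<forall>x\<in>Basis. relabel (inv p) (relabel p x) = (x :: 'n cfg)"
    "\<forall>x\<in>Basis. relabel p (relabel (inv p) x) = (x :: 'n cfg)"
    by (simp_all add: relabel_comp permutes_inv_o[OF p])
  show "relabel p ` Basis \<subseteq> (Basis :: 'n cfg set)" "relabel (inv p) ` Basis \<subseteq> (Basis :: 'n cfg set)"
    by (force simp: Basis_vec_def relabel_axis[OF p] relabel_axis[OF p'])+
qed

lemma measurable_relabel: "relabel s \<in> lborel \<rightarrow>\<^sub>M lborel"
  by (rule linear_measurable_lborel[OF linear_relabel])

lemma distr_lborel_relabel:
  "p permutes UNIV \<Longrightarrow> distr lborel lborel (relabel p) = (lborel :: 'n::finite cfg measure)"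
  by (rule distr_lborel_permuting_linear[OF linear_relabel bij_betw_relabel_Basis])

lemma AE_lborel_relabel:
  assumes p: "p permutes UNIV" and P: "AE x in lborel. P x"
  shows "AE x in (lborel :: 'n::finite cfg measure). P (relabel p x)"
proof -
  have "AE x in distr lborel lborel (relabel p). P x"
    unfolding distr_lborel_relabel[OF p] by (rule P)
  then show ?thesis
    by (rule AE_distrD[OF measurable_relabel])
qed

lemma borel_measurable_cnj [measurable]:
  "f \<in> borel_measurable M \<Longrightarrow> (\<lambda>x. cnj (f x)) \<in> borel_measurable M"
  by (intro borel_measurable_continuous_on[where f = cnj] continuous_on_cnj continuous_on_id)

lemma mult_le_sum_squares:
  fixes a b :: real
  assumes "0 \<le> a" "0 \<le> b"
  shows "a * b \<le> a\<^sup>2 + b\<^sup>2"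
proof -
  have "2 * (a * b) \<le> a\<^sup>2 + b\<^sup>2"
    using sum_squares_bound[of a b] by (simp add: mult.assoc)
  moreover have "0 \<le> a * b"
    using assms by simp
  ultimately show ?thesis
    by linarith
qed

lemma L2_measurable: "f \<in> L2 \<Longrightarrow> f \<in> borel_measurable lborel"
  by (simp add: L2_def)

lemma L2_integrable: "f \<in> L2 \<Longrightarrow> integrable lborel (\<lambda>x. (cmod (f x))\<^sup>2)"
  by (simp add: L2_def)

lemma L2_add:
  assumes f: "f \<in> L2" and g: "g \<in> L2"
  shows "(\<lambda>x. f x + g x) \<in> L2"
proof -
  have bound: "(cmod (f x + g x))\<^sup>2 \<le> 2 * (cmod (f x))\<^sup>2 + 2 * (cmod (g x))\<^sup>2" for x
  proof -
    have "(cmod (f x + g x))\<^sup>2 \<le> (cmod (f x) + cmod (g x))\<^sup>2"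
      by (intro power_mono norm_triangle_ineq) simp
    also have "\<dots> \<le> 2 * (cmod (f x))\<^sup>2 + 2 * (cmod (g x))\<^sup>2"
      using sum_squares_bound[of "cmod (f x)" "cmod (g x)"] by (simp add: power2_sum)
    finally show ?thesis .
  qed
  have [measurable]: "f \<in> borel_measurable lborel" "g \<in> borel_measurable lborel"
    using f g L2_measurable by blast+
  have "integrable lborel (\<lambda>x. 2 * (cmod (f x))\<^sup>2 + 2 * (cmod (g x))\<^sup>2)"
    using f g by (simp add: L2_integrable)
  then have "integrable lborel (\<lambda>x. (cmod (f x + g x))\<^sup>2)"
    by (rule Bochner_Integration.integrable_bound) (use bound in auto)
  then show ?thesis
    unfolding L2_def by simp
qed

lemma L2_mult:
  assumes "f \<in> L2"
  shows "(\<lambda>x. c * f x) \<in> L2"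
proof -
  have [measurable]: "f \<in> borel_measurable lborel"
    using assms by (rule L2_measurable)
  show ?thesis
    using assms by (simp add: L2_def norm_mult power_mult_distrib)
qed

lemma L2_zero: "(\<lambda>x. 0) \<in> L2"
  by (simp add: L2_def)

lemma L2_sum: "finite J \<Longrightarrow> (\<And>j. j \<in> J \<Longrightarrow> f j \<in> L2) \<Longrightarrow> (\<lambda>x. \<Sum>j\<in>J. f j x) \<in> L2"
  by (induction J rule: finite_induct) (simp_all add: L2_zero L2_add)

lemma integrable_cnj_mult_L2:
  assumes f: "f \<in> L2" and g: "g \<in> L2"
  shows "integrable lborel (\<lambda>x. cnj (f x) * g x)"
proof -
  have [measurable]: "f \<in> borel_measurable lborel" "g \<in> borel_measurable lborel"
    using f g L2_measurable by blast+
  have "integrable lborel (\<lambda>x. (cmod (f x))\<^sup>2 + (cmod (g x))\<^sup>2)"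
    using f g by (simp add: L2_integrable)
  then show ?thesis
    by (rule Bochner_Integration.integrable_bound) (auto simp: norm_mult mult_le_sum_squares)
qed

lemma ip_self: "ip f f = complex_of_real ((nrm f)\<^sup>2)"
proof -
  have "cnj (f x) * f x = complex_of_real ((cmod (f x))\<^sup>2)" for x
    by (metis complex_norm_square mult.commute)
  then have "ip f f = complex_of_real (\<integral>x. (cmod (f x))\<^sup>2 \<partial>lborel)"
    unfolding ip_def by (simp only: integral_complex_of_real)
  moreover have "0 \<le> (\<integral>x. (cmod (f x))\<^sup>2 \<partial>lborel)"
    by (simp add: integral_nonneg_AE)
  ultimately show ?thesis
    by (simp add: nrm_def)
qed

lemma norm_ip_le:
  assumes f: "f \<in> L2" and g: "g \<in> L2"
  shows "cmod (ip f g) \<le> (nrm f)\<^sup>2 + (nrm g)\<^sup>2"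
proof -
  have "cmod (ip f g) \<le> (\<integral>x. cmod (cnj (f x) * g x) \<partial>lborel)"
    unfolding ip_def by (rule integral_norm_bound)
  also have "\<dots> \<le> (\<integral>x. (cmod (f x))\<^sup>2 + (cmod (g x))\<^sup>2 \<partial>lborel)"
    using f g by (intro integral_mono integrable_norm integrable_cnj_mult_L2 Bochner_Integration.integrable_add
        L2_integrable) (auto simp: norm_mult mult_le_sum_squares)
  also have "\<dots> = (nrm f)\<^sup>2 + (nrm g)\<^sup>2"
    using f g by (simp add: nrm_def L2_integrable integral_nonneg_AE)
  finally show ?thesis .
qed

lemma ip_mult_right: "ip f (\<lambda>x. c * g x) = c * ip f g"
  by (simp add: ip_def mult.left_commute)

lemma ip_mult_left: "ip (\<lambda>x. c * f x) g = cnj c * ip f g"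
  by (simp add: ip_def mult.assoc)

lemma ip_sum_right:
  "f \<in> L2 \<Longrightarrow> (\<And>j. j \<in> J \<Longrightarrow> g j \<in> L2) \<Longrightarrow> ip f (\<lambda>x. \<Sum>j\<in>J. g j x) = (\<Sum>j\<in>J. ip f (g j))"
  by (simp add: ip_def sum_distrib_left integrable_cnj_mult_L2)

lemma ip_sum_left:
  "(\<And>j. j \<in> J \<Longrightarrow> f j \<in> L2) \<Longrightarrow> g \<in> L2 \<Longrightarrow> ip (\<lambda>x. \<Sum>j\<in>J. f j x) g = (\<Sum>j\<in>J. ip (f j) g)"
  by (simp add: ip_def sum_distrib_right integrable_cnj_mult_L2)

lemma ip_eq_relabel_AE:
  fixes f g f' g' :: "'n::finite cfg \<Rightarrow> complex"
  assumes p: "p permutes UNIV"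
    and meas: "f \<in> borel_measurable lborel" "g \<in> borel_measurable lborel"
      "f' \<in> borel_measurable lborel" "g' \<in> borel_measurable lborel"
    and f: "AE x in lborel. f x = f' (relabel p x)" and g: "AE x in lborel. g x = g' (relabel p x)"
  shows "ip f g = ip f' g'"
proof -
  note [measurable] = meas measurable_relabel
  have "ip f g = (\<integral>x. cnj (f' (relabel p x)) * g' (relabel p x) \<partial>lborel)"
    unfolding ip_def by (rule integral_cong_AE) (measurable, use f g in \<open>auto elim: AE_mp\<close>)
  also have "\<dots> = integral\<^sup>L (distr lborel lborel (relabel p)) (\<lambda>x. cnj (f' x) * g' x)"
    by (rule integral_distr[symmetric]) measurable
  also have "\<dots> = ip f' g'"
    by (simp add: distr_lborel_relabel[OF p] ip_def)
  finally show ?thesis .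
qed

lemma nrm_eq_relabel_AE:
  fixes f g :: "'n::finite cfg \<Rightarrow> complex"
  assumes "p permutes UNIV" "f \<in> borel_measurable lborel" "g \<in> borel_measurable lborel"
    and "AE x in lborel. f x = g (relabel p x)"
  shows "nrm f = nrm g"
proof -
  have "ip f f = ip g g"
    by (rule ip_eq_relabel_AE[OF assms(1,2,2,3,3,4,4)])
  then have "(nrm f)\<^sup>2 = (nrm g)\<^sup>2"
    by (simp only: ip_self of_real_eq_iff)
  then show ?thesis
    by (simp add: nrm_def)
qed

lemma norm_double_sum_ip_le:
  assumes J: "finite J"
    and r: "\<And>j. j \<in> J \<Longrightarrow> nrm (Q j) = r"
    and X: "\<And>j k. j \<in> J \<Longrightarrow> k \<in> J \<Longrightarrow> j \<noteq> k \<Longrightarrow> cmod (ip (Q j) (Q k)) \<le> X"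
  shows "cmod (\<Sum>j\<in>J. \<Sum>k\<in>J. ip (Q j) (Q k)) \<le> card J * (r\<^sup>2 + (real (card J) - 1) * X)"
proof -
  have row: "(\<Sum>k\<in>J. cmod (ip (Q j) (Q k))) \<le> r\<^sup>2 + (real (card J) - 1) * X" if j: "j \<in> J" for j
  proof -
    have "(\<Sum>k\<in>J. cmod (ip (Q j) (Q k))) = cmod (ip (Q j) (Q j)) + (\<Sum>k\<in>J - {j}. cmod (ip (Q j) (Q k)))"
      using J j by (simp add: sum.remove)
    also have "\<dots> \<le> r\<^sup>2 + (\<Sum>k\<in>J - {j}. X)"
      using j r[OF j] X[OF j] by (intro add_mono sum_mono) (auto simp: ip_self norm_power)
    also have "\<dots> = r\<^sup>2 + (real (card J) - 1) * X"
      using J j card_gt_0_iff[of J] by (auto simp: card_Diff_singleton of_nat_diff)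
    finally show ?thesis .
  qed
  have "cmod (\<Sum>j\<in>J. \<Sum>k\<in>J. ip (Q j) (Q k)) \<le> (\<Sum>j\<in>J. \<Sum>k\<in>J. cmod (ip (Q j) (Q k)))"
    by (rule order_trans[OF norm_sum sum_mono[OF norm_sum]])
  also have "\<dots> \<le> (\<Sum>j\<in>J. r\<^sup>2 + (real (card J) - 1) * X)"
    by (rule sum_mono[OF row])
  finally show ?thesis
    by simp
qed

lemma norm_ip_le_average:
  fixes Omega :: "'n::finite cfg \<Rightarrow> complex" and Q :: "'j \<Rightarrow> 'n cfg \<Rightarrow> complex"
  assumes J: "finite J" "J \<noteq> {}"
    and Omega: "Omega \<in> L2" and Q: "\<And>j. j \<in> J \<Longrightarrow> Q j \<in> L2"
    and w: "\<And>j. j \<in> J \<Longrightarrow> ip Omega (Q j) = w"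
    and r: "\<And>j. j \<in> J \<Longrightarrow> nrm (Q j) = r"
    and X: "\<And>j k. j \<in> J \<Longrightarrow> k \<in> J \<Longrightarrow> j \<noteq> k \<Longrightarrow> cmod (ip (Q j) (Q k)) \<le> X" "0 \<le> X"
  shows "cmod w \<le> (nrm Omega)\<^sup>2 + r\<^sup>2 / card J + X"
proof -
  define n where "n = real (card J)"
  have n: "n > 0"
    using J by (simp add: n_def card_gt_0_iff)
  define Phi where "Phi = (\<lambda>x. complex_of_real (1 / n) * (\<Sum>j\<in>J. Q j x))"
  have sum_L2: "(\<lambda>x. \<Sum>j\<in>J. Q j x) \<in> L2"
    using J(1) Q by (rule L2_sum)
  have Phi_L2: "Phi \<in> L2"
    unfolding Phi_def using sum_L2 by (rule L2_mult)
  have "ip Omega Phi = complex_of_real (1 / n) * (\<Sum>j\<in>J. ip Omega (Q j))"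
    unfolding Phi_def by (simp only: ip_mult_right ip_sum_right[OF Omega Q])
  then have "ip Omega Phi = w"
    using n w by (simp add: n_def)
  moreover have "(nrm Phi)\<^sup>2 \<le> r\<^sup>2 / n + X"
  proof -
    have "(nrm Phi)\<^sup>2 = cmod (ip Phi Phi)"
      by (simp add: ip_self norm_power)
    also have "ip Phi Phi = complex_of_real (1 / n\<^sup>2) * (\<Sum>j\<in>J. ip (Q j) (\<lambda>x. \<Sum>k\<in>J. Q k x))"
      unfolding Phi_def by (simp only: ip_mult_left ip_mult_right ip_sum_left[OF Q sum_L2])
        (simp add: power2_eq_square)
    also have "\<dots> = complex_of_real (1 / n\<^sup>2) * (\<Sum>j\<in>J. \<Sum>k\<in>J. ip (Q j) (Q k))"
      using Q by (simp add: ip_sum_right)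
    also have "cmod \<dots> \<le> (1 / n\<^sup>2) * (n * (r\<^sup>2 + (n - 1) * X))"
    proof -
      have "cmod (\<Sum>j\<in>J. \<Sum>k\<in>J. ip (Q j) (Q k)) \<le> n * (r\<^sup>2 + (n - 1) * X)"
        unfolding n_def by (rule norm_double_sum_ip_le) (use J r X in auto)
      then show ?thesis
        using n by (simp add: norm_divide norm_power divide_right_mono)
    qed
    also have "\<dots> = r\<^sup>2 / n + (1 - 1 / n) * X"
      using n by (simp add: field_simps power2_eq_square)
    also have "\<dots> \<le> r\<^sup>2 / n + X"
      using n X(2) by (simp add: left_diff_distrib)
    finally show ?thesis .
  qed
  ultimately show ?thesis
    using norm_ip_le[OF Omega Phi_L2] by (simp add: n_def)
qed

lemma permutes_fix_Diff: "p permutes S \<Longrightarrow> p x = x \<Longrightarrow> p permutes S - {x}"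
  by (auto simp: permutes_def)

lemma permutes_map_pair:
  assumes "b \<in> S" "c \<in> S" "j \<in> S" "k \<in> S" "b \<noteq> c" "j \<noteq> k"
  obtains p where "p permutes S" "p b = j" "p c = k"
proof
  define k' where "k' = Transposition.transpose b j k"
  have "k' \<in> S" "k' \<noteq> b"
    using assms by (auto simp: k'_def Transposition.transpose_def)
  then show "(Transposition.transpose b j \<circ> Transposition.transpose c k') permutes S"
    using assms by (intro permutes_compose permutes_swap_id)
  show "(Transposition.transpose b j \<circ> Transposition.transpose c k') b = j"
    using assms \<open>k' \<noteq> b\<close> by simp
  show "(Transposition.transpose b j \<circ> Transposition.transpose c k') c = k"
    by (simp add: k'_def)
qed

locale pair_operator =
  fixes a b :: "'n::finite"
    and T :: "('n cfg \<Rightarrow> complex) \<Rightarrow> 'n cfg \<Rightarrow> complex"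
    and Chi :: "'n cfg \<Rightarrow> complex"
  assumes a_neq_b: "a \<noteq> b"
    and sym_Chi: "sym_except a Chi"
    and acts_on_T: "acts_on a b T"
    and op_1j_L2: "\<And>j. j \<noteq> a \<Longrightarrow> op_1j b T j Chi \<in> L2"
begin

abbreviation Q :: "'n \<Rightarrow> 'n cfg \<Rightarrow> complex" where
  "Q j \<equiv> op_1j b T j Chi"

lemma Q_b: "Q b = T Chi"
  by (simp add: op_1j_def)

lemma Q_measurable: "j \<noteq> a \<Longrightarrow> Q j \<in> borel_measurable lborel"
  using op_1j_L2 by (rule L2_measurable)

lemma T_AE_cong: "AE x in lborel. f x = g x \<Longrightarrow> AE x in lborel. T f x = T g x"
  using acts_on_T by (simp add: acts_on_def)

lemma T_Chi_relabel_AE: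
  assumes q: "q permutes UNIV - {a, b}"
  shows "AE x in lborel. T Chi (relabel q x) = T Chi x"
proof -
  have "q permutes UNIV - {a}"
    using q by (rule permutes_subset) auto
  then have "AE x in lborel. T (Chi \<circ> relabel q) x = T Chi x"
    using sym_Chi by (intro T_AE_cong) (simp add: sym_except_def)
  moreover have "AE x in lborel. T (Chi \<circ> relabel q) x = T Chi (relabel q x)"
    using acts_on_T q by (simp add: acts_on_def)
  ultimately show ?thesis
    by eventually_elim simp
qed

lemma Q_relabel_AE:
  assumes p: "p permutes UNIV - {a}"
  shows "AE x in lborel. Q (p b) x = Q b (relabel p x)"
proof -
  define \<tau> where "\<tau> = Transposition.transpose b (p b)"
  have "p b \<noteq> a"
    using p a_neq_b permutes_in_image[OF p, of b] by simp
  then have \<tau>: "\<tau> permutes UNIV - {a}"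
    unfolding \<tau>_def using a_neq_b by (intro permutes_swap_id) auto
  then have \<tau>_UNIV: "\<tau> permutes UNIV"
    by (rule permutes_subset) simp
  have "AE x in lborel. T (Chi \<circ> relabel \<tau>) x = T Chi x"
    using sym_Chi \<tau> by (intro T_AE_cong) (simp add: sym_except_def)
  then have Q_eq: "AE x in lborel. Q (p b) x = T Chi (relabel \<tau> x)"
    using AE_lborel_relabel[OF \<tau>_UNIV] by (simp add: op_1j_def \<tau>_def)
  have "(\<tau> \<circ> p) permutes UNIV - {a}" "(\<tau> \<circ> p) b = b"
    using p \<tau> by (simp_all add: permutes_compose \<tau>_def)
  then have "(\<tau> \<circ> p) permutes UNIV - {a, b}"
    using permutes_fix_Diff by (metis Diff_insert2)
  from AE_lborel_relabel[OF \<tau>_UNIV T_Chi_relabel_AE[OF this]]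
  have "AE x in lborel. T Chi (relabel p x) = T Chi (relabel \<tau> x)"
    by (simp add: relabel_comp o_assoc \<tau>_def)
  with Q_eq show ?thesis
    by eventually_elim (simp add: Q_b)
qed

lemma permutes_transpose_b:
  "j \<noteq> a \<Longrightarrow> Transposition.transpose b j permutes UNIV - {a}"
  using a_neq_b by (intro permutes_swap_id) auto

lemma permutes_UNIV_of_Diff: "p permutes UNIV - {a} \<Longrightarrow> p permutes UNIV"
  by (erule permutes_subset) simp

lemma Q_transpose_AE:
  "j \<noteq> a \<Longrightarrow> AE x in lborel. Q j x = Q b (relabel (Transposition.transpose b j) x)"
  using Q_relabel_AE[OF permutes_transpose_b] by simp

lemma ip_Q_eq_of_sym:
  assumes Omega: "sym_except a Omega" "Omega \<in> borel_measurable lborel" and j: "j \<noteq> a"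
  shows "ip Omega (Q j) = ip Omega (Q b)"
proof -
  have p: "Transposition.transpose b j permutes UNIV - {a}"
    using j by (rule permutes_transpose_b)
  have "AE x in lborel. Omega x = Omega (relabel (Transposition.transpose b j) x)"
    using Omega p by (auto simp: sym_except_def elim: AE_mp)
  then show ?thesis
    using Omega(2) Q_measurable j a_neq_b permutes_UNIV_of_Diff[OF p] Q_transpose_AE[OF j]
    by (intro ip_eq_relabel_AE) auto
qed

lemma nrm_Q_eq: "j \<noteq> a \<Longrightarrow> nrm (Q j) = nrm (Q b)"
  using Q_measurable a_neq_b permutes_transpose_b Q_transpose_AE
  by (intro nrm_eq_relabel_AE permutes_UNIV_of_Diff) auto

lemma ip_Q_Q_eq:
  assumes "c \<noteq> a" "c \<noteq> b" "j \<noteq> a" "k \<noteq> a" "j \<noteq> k"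
  shows "ip (Q j) (Q k) = ip (Q b) (Q c)"
proof -
  obtain p where p: "p permutes UNIV - {a}" "p b = j" "p c = k"
    by (rule permutes_map_pair[of b "UNIV - {a}" c j k]) (use assms a_neq_b in auto)
  define r where "r = Transposition.transpose b c"
  have r: "r permutes UNIV - {a}"
    unfolding r_def using assms(1) by (rule permutes_transpose_b)
  have "AE x in lborel. Q j x = Q b (relabel p x)"
    using Q_relabel_AE[OF p(1)] by (simp add: p(2))
  moreover have "AE x in lborel. Q k x = Q c (relabel p x)"
  proof -
    have "AE x in lborel. Q k x = Q b (relabel (p \<circ> r) x)"
      using Q_relabel_AE[OF permutes_compose[OF r p(1)]] by (simp add: r_def p(3))
    moreover have "AE x in lborel. Q c (relabel p x) = Q b (relabel r (relabel p x))"
      using AE_lborel_relabel[OF permutes_UNIV_of_Diff[OF p(1)] Q_relabel_AE[OF r]]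
      by (simp add: r_def)
    ultimately show ?thesis
      by eventually_elim (simp add: relabel_comp)
  qed
  ultimately show ?thesis
    using assms a_neq_b Q_measurable permutes_UNIV_of_Diff[OF p(1)]
    by (intro ip_eq_relabel_AE) auto
qed

end

theorem lemma7:
  fixes a b c :: "'n::finite"
    and Omega Chi :: "'n cfg \<Rightarrow> complex"
    and T :: "('n cfg \<Rightarrow> complex) \<Rightarrow> ('n cfg \<Rightarrow> complex)"
  assumes "CARD('n) \<ge> 3"
    and "a \<noteq> b" "a \<noteq> c" "b \<noteq> c"
    and "Omega \<in> L2" "Chi \<in> L2"
    and "sym_except a Omega" "sym_except a Chi"
    and "acts_on a b T"
    and "\<forall>j. j \<noteq> a \<longrightarrow> op_1j b T j Chi \<in> L2"
  shows "cmod (ip Omega (op_1j b T b Chi))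
           \<le> (nrm Omega)^2 + cmod (ip (op_1j b T b Chi) (op_1j b T c Chi))
             + (nrm (op_1j b T b Chi))^2 / (real CARD('n) - 1)"
proof -
  interpret pair_operator a b T Chi
    using assms by unfold_locales auto
  have "cmod (ip Omega (Q b))
      \<le> (nrm Omega)\<^sup>2 + (nrm (Q b))\<^sup>2 / card (UNIV - {a}) + cmod (ip (Q b) (Q c))"
  proof (rule norm_ip_le_average)
    show "finite (UNIV - {a})" "UNIV - {a} \<noteq> {}" "Omega \<in> L2" "0 \<le> cmod (ip (Q b) (Q c))"
      using assms(2,5) by auto
    show "\<And>j. j \<in> UNIV - {a} \<Longrightarrow> Q j \<in> L2"
      using op_1j_L2 by blast
    show "\<And>j. j \<in> UNIV - {a} \<Longrightarrow> ip Omega (Q j) = ip Omega (Q b)"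
      using ip_Q_eq_of_sym[OF assms(7) L2_measurable[OF assms(5)]] by blast
    show "\<And>j. j \<in> UNIV - {a} \<Longrightarrow> nrm (Q j) = nrm (Q b)"
      using nrm_Q_eq by blast
    show "\<And>j k. j \<in> UNIV - {a} \<Longrightarrow> k \<in> UNIV - {a} \<Longrightarrow> j \<noteq> k
        \<Longrightarrow> cmod (ip (Q j) (Q k)) \<le> cmod (ip (Q b) (Q c))"
      using ip_Q_Q_eq assms(3,4) by (metis DiffE insertI1 order_refl)
  qed
  then show ?thesis
    by (simp add: card_Diff_singleton of_nat_diff add.commute add.left_commute)
qed

end
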